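(* Let $G$ be a finite group with identity $\xi$, let $S$ be a non-empty inverse-closed subset of $G$ with $\xi\notin S$, and let $d_\Gamma$ be the graph metric of the Cayley graph $\mathrm{Cay}(G,S)$. Let $d$ be a positive integer and let $C\subseteq G$ be a code with $\min\{d_\Gamma(c,c')\,:\,c,c'\in C,\ c\neq c'\}\geq d$. Let $H$ be a subgroup of $G$, let $X=\{Ha_1,\dots,Ha_m\}$ be the set of right cosets of $H$ in $G$ (so $m=|G|/|H|$), and let $T=S^{\lfloor\frac{d-1}{2}\rfloor}\cup\{\xi\}$. Then the optimal value of the integer program $$\text{maximize } \sum_{i=1}^{m}x_i\quad\text{subject to}\quad \Big(\sum_{t\in T}\rho_X^G(t)\Big)(x_1,\ldots,x_m)^t\leq |H|\,\mathbf{1},\qquad x_i\in\mathbb{Z},\ x_i\geq 0\ (1\leq i\leq m),$$ is at least $|C|$ (i.e., it is an upper bound on $|C|$), where $\mathbf{1}$ is the all-ones column vector of length $m$ and the inequality is entrywise.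
   Context: $\mathrm{Cay}(G,S)$ is the simple graph with vertex set $G$ in which $g,h$ are adjacent iff $gh^{-1}\in S$; $d_\Gamma(g,h)$ is the length of a shortest path between $g$ and $h$. For a positive integer $r$, $S^r=\{s_1\cdots s_t : s_1,\dots,s_t\in S,\ 1\leq t\leq r\}$. For the right cosets ordered as $Ha_1<\dots<Ha_m$, $\rho_X^G(g)$ is the $m\times m$ matrix whose $(i,j)$ entry is $1$ if $Ha_ig=Ha_j$ and $0$ otherwise. *)

theory Defs
  imports "HOL-Algebra.Algebra" "HOL-Library.Extended_Nat"
begin

definition cay_walk :: "('a, 'b) monoid_scheme \<Rightarrow> 'a set \<Rightarrow> nat \<Rightarrow> 'a \<Rightarrow> 'a \<Rightarrow> bool" where
  "cay_walk G S n g h \<longleftrightarrow> (\<exists>f :: nat \<Rightarrow> 'a. f 0 = g \<and> f n = h \<and>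
      (\<forall>i\<le>n. f i \<in> carrier G) \<and>
      (\<forall>i<n. f i \<otimes>\<^bsub>G\<^esub> inv\<^bsub>G\<^esub> (f (Suc i)) \<in> S))"

definition cay_dist :: "('a, 'b) monoid_scheme \<Rightarrow> 'a set \<Rightarrow> 'a \<Rightarrow> 'a \<Rightarrow> enat" where
  "cay_dist G S g h = (if \<exists>n. cay_walk G S n g h then enat (LEAST n. cay_walk G S n g h) else \<infinity>)"

definition set_power :: "('a, 'b) monoid_scheme \<Rightarrow> 'a set \<Rightarrow> nat \<Rightarrow> 'a set" where
  "set_power G S r = {foldr (\<otimes>\<^bsub>G\<^esub>) l \<one>\<^bsub>G\<^esub> | l. set l \<subseteq> S \<and> 1 \<le> length l \<and> length l \<le> r}"

definition rho :: "('a, 'b) monoid_scheme \<Rightarrow> 'a set \<Rightarrow> (nat \<Rightarrow> 'a) \<Rightarrow> 'a \<Rightarrow> nat \<Rightarrow> nat \<Rightarrow> int" where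
  "rho G H a g i j = (if (H #>\<^bsub>G\<^esub> a i) #>\<^bsub>G\<^esub> g = H #>\<^bsub>G\<^esub> a j then 1 else 0)"

definition ip_feasible :: "('a, 'b) monoid_scheme \<Rightarrow> 'a set \<Rightarrow> (nat \<Rightarrow> 'a) \<Rightarrow> nat \<Rightarrow> 'a set \<Rightarrow> (nat \<Rightarrow> int) \<Rightarrow> bool" where
  "ip_feasible G H a m T x \<longleftrightarrow>
     (\<forall>i\<in>{1..m}. 0 \<le> x i) \<and>
     (\<forall>i\<in>{1..m}. (\<Sum>j=1..m. (\<Sum>t\<in>T. rho G H a t i j) * x j) \<le> int (card H))"

definition ip_opt :: "('a, 'b) monoid_scheme \<Rightarrow> 'a set \<Rightarrow> (nat \<Rightarrow> 'a) \<Rightarrow> nat \<Rightarrow> 'a set \<Rightarrow> int" where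
  "ip_opt G H a m T = Max ((\<lambda>x. \<Sum>i=1..m. x i) ` {x. ip_feasible G H a m T x})"

end

theory Submission
  imports Defs
begin

text \<open>Left multiplication by an element of S moves along an edge of Cay(G,S), so
  T = S^r \<union> {\<xi>} with r = \<lfloor>(d-1)/2\<rfloor> is the ball of radius r around \<xi> and the
  translates T c, c \<in> C, are pairwise disjoint: (t, c) \<mapsto> t c is injective on T \<times> C.
  Let x_i count the codewords c with c^-1 \<in> H a_i; these numbers sum to |C|. Row i of the
  constraint matrix applied to x counts the pairs (t, c) \<in> T \<times> C with (t c)^-1 \<in> H a_i,
  because c^-1 \<in> H a_i t iff c^-1 t^-1 \<in> H a_i. By injectivity this is at most
  |H a_i| = |H|, so x is feasible with objective value |C|.\<close>

lemma (in group) foldr_mult_append: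
  "set l \<subseteq> carrier G \<Longrightarrow> set k \<subseteq> carrier G \<Longrightarrow>
    foldr (\<otimes>) (l @ k) \<one> = foldr (\<otimes>) l \<one> \<otimes> foldr (\<otimes>) k \<one>"
  by (induction l) (auto simp: m_assoc)

lemma (in group) inv_foldr_mult:
  "set l \<subseteq> carrier G \<Longrightarrow> inv (foldr (\<otimes>) l \<one>) = foldr (\<otimes>) (map (\<lambda>x. inv x) (rev l)) \<one>"
proof (induction l)
  case (Cons x l)
  then have "set (map (\<lambda>x. inv x) (rev l)) \<subseteq> carrier G" by auto
  with Cons show ?case by (simp add: inv_mult_group foldr_mult_append del: foldr_append)
qed simp

lemma (in group) cay_walk_foldr_mult:
  assumes "set l \<subseteq> S" "S \<subseteq> carrier G" "h \<in> carrier G"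
  shows "cay_walk G S (length l) (foldr (\<otimes>) l \<one> \<otimes> h) h"
proof -
  define f where "f i = foldr (\<otimes>) (drop i l) \<one> \<otimes> h" for i
  have l: "set (drop i l) \<subseteq> carrier G" for i
    using assms(1,2) set_drop_subset by fast
  have "f i \<otimes> inv (f (Suc i)) = l ! i" if "i < length l" for i
  proof -
    have "drop i l = l ! i # drop (Suc i) l" using that by (rule Cons_nth_drop_Suc[symmetric])
    moreover have "l ! i \<in> carrier G" using that assms(1,2) nth_mem by blast
    ultimately show ?thesis
      using l[of "Suc i"] assms(3) by (simp add: f_def inv_solve_right' m_assoc)
  qed
  then show ?thesis
    unfolding cay_walk_def using assms l
    by (intro exI[of _ f]) (auto simp: f_def)
qed

lemma (in group) cay_dist_foldr_mult_le:
  assumes "set l \<subseteq> S" "S \<subseteq> carrier G" "h \<in> carrier G"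
  shows "cay_dist G S (foldr (\<otimes>) l \<one> \<otimes> h) h \<le> enat (length l)"
  using cay_walk_foldr_mult[OF assms] unfolding cay_dist_def by (auto intro: Least_le)

lemma (in group) set_power_Un_oneE:
  assumes "t \<in> set_power G S r \<union> {\<one>}"
  obtains l where "set l \<subseteq> S" "length l \<le> r" "t = foldr (\<otimes>) l \<one>"
  using assms unfolding set_power_def by (auto intro: that[of "[]"])

lemma (in group) set_power_subset_carrier:
  "S \<subseteq> carrier G \<Longrightarrow> set_power G S r \<subseteq> carrier G"
  unfolding set_power_def by auto

lemma (in group) cay_dist_le_if_mult_eq:
  assumes S: "S \<subseteq> carrier G" "\<forall>s\<in>S. inv s \<in> S"
    and t: "t \<in> set_power G S r \<union> {\<one>}" "t' \<in> set_power G S r \<union> {\<one>}"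
    and c: "c \<in> carrier G" "c' \<in> carrier G"
    and meet: "t \<otimes> c = t' \<otimes> c'"
  shows "cay_dist G S c c' \<le> enat (2 * r)"
proof -
  obtain l where l: "set l \<subseteq> S" "length l \<le> r" "t = foldr (\<otimes>) l \<one>"
    using t(1) by (rule set_power_Un_oneE)
  obtain k where k: "set k \<subseteq> S" "length k \<le> r" "t' = foldr (\<otimes>) k \<one>"
    using t(2) by (rule set_power_Un_oneE)
  define w where "w = map (\<lambda>x. inv x) (rev l) @ k"
  have w_S: "set w \<subseteq> S" using l(1) k(1) S(2) by (auto simp: w_def)
  have lk: "set l \<subseteq> carrier G" "set k \<subseteq> carrier G" using l(1) k(1) S(1) by auto
  have "set (map (\<lambda>x. inv x) (rev l)) \<subseteq> carrier G" using lk(1) by auto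
  then have "foldr (\<otimes>) w \<one> = inv t \<otimes> t'"
    unfolding w_def using lk l(3) k(3) by (simp add: foldr_mult_append inv_foldr_mult del: foldr_append)
  moreover have "c = inv t \<otimes> t' \<otimes> c'"
    using meet c lk l(3) k(3) by (simp add: m_assoc inv_solve_left)
  ultimately have "cay_dist G S c c' \<le> enat (length w)"
    using cay_dist_foldr_mult_le[OF w_S S(1) c(2)] by simp
  also have "length w \<le> 2 * r" using l(2) k(2) by (simp add: w_def)
  finally show ?thesis by simp
qed

lemma (in group) inj_on_mult_set_power_Un_one:
  assumes S: "S \<subseteq> carrier G" "\<forall>s\<in>S. inv s \<in> S"
    and C: "C \<subseteq> carrier G" "\<forall>c\<in>C. \<forall>c'\<in>C. c \<noteq> c' \<longrightarrow> enat d \<le> cay_dist G S c c'"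
    and r: "2 * r < d"
  shows "inj_on (\<lambda>(t, c). t \<otimes> c) ((set_power G S r \<union> {\<one>}) \<times> C)"
proof (rule inj_onI, clarify)
  fix t c t' c'
  assume t: "t \<in> set_power G S r \<union> {\<one>}" "t' \<in> set_power G S r \<union> {\<one>}"
    and c: "c \<in> C" "c' \<in> C" and meet: "t \<otimes> c = t' \<otimes> c'"
  have "c = c'"
  proof (rule ccontr)
    assume "c \<noteq> c'"
    then have "enat d \<le> cay_dist G S c c'" using C(2) c by blast
    also have "\<dots> \<le> enat (2 * r)"
      using cay_dist_le_if_mult_eq[OF S t] c C(1) meet by blast
    finally show False using r by simp
  qed
  moreover have "t \<in> carrier G" "t' \<in> carrier G"
    using t set_power_subset_carrier[OF S(1)] by auto
  ultimately show "t = t' \<and> c = c'" using meet c C(1) by auto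
qed

locale right_coset_enumeration = group G + subgroup H G for G (structure) and H +
  fixes a :: "nat \<Rightarrow> 'a" and m :: nat
  assumes representatives_closed: "\<forall>i\<in>{1..m}. a i \<in> carrier G"
    and coset_bij: "bij_betw (\<lambda>i. H #> a i) {1..m} (rcosets H)"
begin

lemma coset_index_exists:
  assumes "g \<in> carrier G"
  obtains j where "j \<in> {1..m}" "H #> a j = H #> g"
proof -
  have "H #> g \<in> rcosets H" using assms subset by (rule rcosetsI[rotated])
  then show thesis using coset_bij that unfolding bij_betw_def by (metis imageE)
qed

lemma coset_eq_iff_index_eq:
  "i \<in> {1..m} \<Longrightarrow> j \<in> {1..m} \<Longrightarrow> H #> a i = H #> a j \<longleftrightarrow> i = j"
  using coset_bij unfolding bij_betw_def inj_on_def by blast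

lemma rho_row_sum:
  assumes i: "i \<in> {1..m}" and t: "t \<in> carrier G"
    and j: "j \<in> {1..m}" "H #> a j = H #> (a i \<otimes> t)"
  shows "(\<Sum>k=1..m. rho G H a t i k * f k) = f j"
proof -
  have "H #> a i #> t = H #> (a i \<otimes> t)"
    using i t representatives_closed subset by (simp add: coset_mult_assoc)
  then have "rho G H a t i k = (if k = j then 1 else 0)" if "k \<in> {1..m}" for k
    using j coset_eq_iff_index_eq[OF that j(1)] unfolding rho_def by auto
  then have "(\<Sum>k=1..m. rho G H a t i k * f k) = (\<Sum>k=1..m. if k = j then f k else 0)"
    by (intro sum.cong) auto
  then show ?thesis using j(1) by simp
qed

lemma rho_one_diag: "i \<in> {1..m} \<Longrightarrow> rho G H a \<one> i i = 1"
  using representatives_closed subset by (simp add: rho_def r_coset_subset_G)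

lemma inv_mult_mem_coset_iff:
  assumes "g \<in> carrier G" "t \<in> carrier G" "c \<in> carrier G"
  shows "inv (t \<otimes> c) \<in> H #> g \<longleftrightarrow> inv c \<in> H #> (g \<otimes> t)"
  using assms by (simp add: rcos_module[OF is_group] inv_mult_group m_assoc)

definition coset_profile :: "'a set \<Rightarrow> nat \<Rightarrow> int" where
  "coset_profile C i = int (card {c \<in> C. inv c \<in> H #> a i})"

lemma sum_coset_profile:
  assumes "finite C" "C \<subseteq> carrier G"
  shows "(\<Sum>i=1..m. coset_profile C i) = int (card C)"
proof -
  define A where "A i = {c \<in> C. inv c \<in> H #> a i}" for i
  have "C \<subseteq> (\<Union>i\<in>{1..m}. A i)"
  proof
    fix c assume c: "c \<in> C"
    then have inv_c: "inv c \<in> carrier G" using assms(2) by blast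
    then obtain j where "j \<in> {1..m}" "H #> a j = H #> inv c" by (rule coset_index_exists)
    moreover have "inv c \<in> H #> inv c" using inv_c subgroup_axioms by (rule rcos_self)
    ultimately show "c \<in> (\<Union>i\<in>{1..m}. A i)" using c unfolding A_def by force
  qed
  then have C: "C = (\<Union>i\<in>{1..m}. A i)" by (auto simp: A_def)
  have "A i \<inter> A j = {}" if "i \<in> {1..m}" "j \<in> {1..m}" "i \<noteq> j" for i j
  proof -
    have "H #> a i \<in> rcosets H" "H #> a j \<in> rcosets H"
      using that coset_bij unfolding bij_betw_def by auto
    moreover have "H #> a i \<noteq> H #> a j" using that coset_eq_iff_index_eq by blast
    ultimately have "disjnt (H #> a i) (H #> a j)"
      by (intro pairwiseD[OF rcos_disjoint[OF subgroup_axioms]])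
    then show ?thesis unfolding A_def disjnt_def by blast
  qed
  then have "card C = (\<Sum>i=1..m. card (A i))"
    unfolding C using assms(1) by (intro card_UN_disjoint) (auto simp: A_def)
  then show ?thesis by (simp add: coset_profile_def A_def)
qed

lemma coset_profile_row_le:
  assumes G: "finite (carrier G)" and T: "T \<subseteq> carrier G" and C: "C \<subseteq> carrier G"
    and packing: "inj_on (\<lambda>(t, c). t \<otimes> c) (T \<times> C)"
    and i: "i \<in> {1..m}"
  shows "(\<Sum>j=1..m. (\<Sum>t\<in>T. rho G H a t i j) * coset_profile C j) \<le> int (card H)"
proof -
  have ai: "a i \<in> carrier G" using i representatives_closed by blast
  define B where "B t = {c \<in> C. inv (t \<otimes> c) \<in> H #> a i}" for t
  have row_t: "(\<Sum>j=1..m. rho G H a t i j * coset_profile C j) = int (card (B t))"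
    if t: "t \<in> T" for t
  proof -
    obtain j where j: "j \<in> {1..m}" "H #> a j = H #> (a i \<otimes> t)"
      using coset_index_exists[of "a i \<otimes> t"] ai t T by auto
    have "{c \<in> C. inv c \<in> H #> a j} = B t"
      unfolding B_def j(2) using C T t ai inv_mult_mem_coset_iff by blast
    then show ?thesis
      using rho_row_sum[OF i _ j] t T by (auto simp: coset_profile_def)
  qed
  have finite: "finite T" "finite C" using G T C finite_subset by auto
  have "(\<Sum>j=1..m. (\<Sum>t\<in>T. rho G H a t i j) * coset_profile C j)
      = (\<Sum>t\<in>T. \<Sum>j=1..m. rho G H a t i j * coset_profile C j)"
    by (simp add: sum_distrib_right sum.swap[of _ T])
  also have "\<dots> = int (card (Sigma T B))"
    using row_t finite by (simp add: card_SigmaI B_def)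
  also have "card (Sigma T B) \<le> card (H #> a i)"
  proof (rule card_inj_on_le)
    have "Sigma T B \<subseteq> T \<times> C" by (auto simp: B_def)
    with packing have "inj_on (\<lambda>(t, c). t \<otimes> c) (Sigma T B)" by (rule inj_on_subset)
    moreover have "(\<lambda>(t, c). t \<otimes> c) ` Sigma T B \<subseteq> carrier G" using T C by (auto simp: B_def subset_iff)
    ultimately have "inj_on ((\<lambda>x. inv x) \<circ> (\<lambda>(t, c). t \<otimes> c)) (Sigma T B)"
      using inv_inj by (blast intro: comp_inj_on inj_on_subset)
    then show "inj_on (\<lambda>(t, c). inv (t \<otimes> c)) (Sigma T B)"
      by (simp add: comp_def case_prod_beta')
    show "(\<lambda>(t, c). inv (t \<otimes> c)) ` Sigma T B \<subseteq> H #> a i" by (auto simp: B_def)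
    show "finite (H #> a i)" using G ai subset r_coset_subset_G finite_subset by metis
  qed
  also have "card (H #> a i) = card H"
    using card_rcosets_equal[OF rcosetsI] ai subset by simp
  finally show ?thesis by simp
qed

lemma ip_feasible_coset_profile:
  assumes "finite (carrier G)" "T \<subseteq> carrier G" "C \<subseteq> carrier G"
    and "inj_on (\<lambda>(t, c). t \<otimes> c) (T \<times> C)"
  shows "ip_feasible G H a m T (coset_profile C)"
  using coset_profile_row_le[OF assms] unfolding ip_feasible_def coset_profile_def by simp

lemma ip_feasible_le_card:
  assumes T: "\<one> \<in> T" "finite T" and y: "ip_feasible G H a m T y" and i: "i \<in> {1..m}"
  shows "y i \<le> int (card H)"
proof -
  have y_nonneg: "\<forall>j\<in>{1..m}. 0 \<le> y j" using y unfolding ip_feasible_def by blast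
  have rho_nonneg: "0 \<le> rho G H a t k j" for t k j unfolding rho_def by simp
  have "1 \<le> (\<Sum>t\<in>T. rho G H a t i i)"
    using member_le_sum[OF T(1) _ T(2), of "\<lambda>t. rho G H a t i i"] rho_nonneg rho_one_diag[OF i]
    by simp
  moreover have "0 \<le> y i" using y_nonneg i by blast
  ultimately have "1 * y i \<le> (\<Sum>t\<in>T. rho G H a t i i) * y i" by (rule mult_right_mono)
  moreover have "(\<Sum>t\<in>T. rho G H a t i i) * y i \<le> (\<Sum>j=1..m. (\<Sum>t\<in>T. rho G H a t i j) * y j)"
    using i y_nonneg rho_nonneg
    by (intro member_le_sum[where f = "\<lambda>j. (\<Sum>t\<in>T. rho G H a t i j) * y j"])
       (auto intro!: sum_nonneg mult_nonneg_nonneg)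
  moreover have "(\<Sum>j=1..m. (\<Sum>t\<in>T. rho G H a t i j) * y j) \<le> int (card H)"
    using y i unfolding ip_feasible_def by blast
  ultimately show ?thesis by linarith
qed

lemma ip_opt_ge:
  assumes "\<one> \<in> T" "finite T" and x: "ip_feasible G H a m T x"
  shows "(\<Sum>i=1..m. x i) \<le> ip_opt G H a m T"
proof -
  have "(\<Sum>i=1..m. y i) \<in> {0..int m * int (card H)}" if y: "ip_feasible G H a m T y" for y
  proof -
    have "(\<Sum>i=1..m. y i) \<le> (\<Sum>i=1..m. int (card H))"
      using ip_feasible_le_card[OF assms(1,2) y] by (intro sum_mono) auto
    moreover have "0 \<le> (\<Sum>i=1..m. y i)"
      using y unfolding ip_feasible_def by (intro sum_nonneg) auto
    ultimately show ?thesis by simp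
  qed
  then have "(\<lambda>y. \<Sum>i=1..m. y i) ` {y. ip_feasible G H a m T y} \<subseteq> {0..int m * int (card H)}"
    by blast
  then have "finite ((\<lambda>y. \<Sum>i=1..m. y i) ` {y. ip_feasible G H a m T y})"
    using finite_subset by blast
  then show ?thesis unfolding ip_opt_def using x by (intro Max_ge) auto
qed

end

theorem theorem2p14:
  fixes G :: "('a, 'b) monoid_scheme" and S C H :: "'a set" and d m :: nat and a :: "nat \<Rightarrow> 'a"
  assumes "group G" and "finite (carrier G)"
    and "S \<subseteq> carrier G" and "S \<noteq> {}" and "\<forall>s\<in>S. inv\<^bsub>G\<^esub> s \<in> S" and "\<one>\<^bsub>G\<^esub> \<notin> S"
    and "0 < d"
    and "C \<subseteq> carrier G"
    and "\<forall>c\<in>C. \<forall>c'\<in>C. c \<noteq> c' \<longrightarrow> enat d \<le> cay_dist G S c c'"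
    and "subgroup H G"
    and "\<forall>i\<in>{1..m}. a i \<in> carrier G"
    and "bij_betw (\<lambda>i. H #>\<^bsub>G\<^esub> a i) {1..m} (rcosets\<^bsub>G\<^esub> H)"
  shows "int (card C) \<le> ip_opt G H a m (set_power G S ((d - 1) div 2) \<union> {\<one>\<^bsub>G\<^esub>})"
proof -
  interpret right_coset_enumeration G H a m
    using assms(1,10-12) by (simp add: right_coset_enumeration_def right_coset_enumeration_axioms_def)
  define T where "T = set_power G S ((d - 1) div 2) \<union> {\<one>\<^bsub>G\<^esub>}"
  have T_carrier: "T \<subseteq> carrier G" using set_power_subset_carrier[OF assms(3)] by (auto simp: T_def)
  have "2 * ((d - 1) div 2) < d" using assms(7) by linarith
  then have "inj_on (\<lambda>(t, c). t \<otimes>\<^bsub>G\<^esub> c) (T \<times> C)"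
    unfolding T_def using assms(3,5,8,9) by (intro inj_on_mult_set_power_Un_one)
  then have "ip_feasible G H a m T (coset_profile C)"
    using assms(2,8) T_carrier by (intro ip_feasible_coset_profile)
  moreover have "finite T" using assms(2) T_carrier finite_subset by blast
  ultimately have "(\<Sum>i=1..m. coset_profile C i) \<le> ip_opt G H a m T"
    by (intro ip_opt_ge) (auto simp: T_def)
  moreover have "finite C" using assms(2,8) finite_subset by blast
  ultimately show ?thesis using sum_coset_profile assms(8) by (simp add: T_def)
qed

end
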